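(* Let $a,c,p\in\mathbb{C}$ with $-c\notin\mathbb{N}\cup\{0\}$. Define sequences $(u_n)_{n\ge0}$ and $(v_n)_{n\ge0}$ by $u_0=1$, $u_1=\frac{a}{c}+p$, $v_0=1$, $v_1=\frac{a}{c}-p$ and, for all integers $n\ge1$, \[ u_{n+1}=\frac{a+p(c+2n)+n}{(n+1)(c+n)}u_n-\frac{p(p+1)}{(n+1)(c+n)}u_{n-1}, \] \[ v_{n+1}=\frac{a-p(c+2n)+n}{(n+1)(c+n)}v_n-\frac{(p-1)p}{(n+1)(c+n)}v_{n-1}. \] Then \[ \cosh(pz)\,M(a,c;z)=\sum_{n=0}^\infty\frac{u_n+v_n}{2}z^n,\qquad z\in\mathbb{C}. \]
   Context: For $a\in\mathbb{C}$, $(a)_n=a(a+1)\cdots(a+n-1)$ denotes the Pochhammer symbol, with $(a)_0=1$. For $a,c\in\mathbb{C}$ with $-c\notin\mathbb{N}\cup\{0\}$, the confluent hypergeometric (Kummer) function is $M(a,c;z)=\sum_{n=0}^\infty \frac{(a)_n}{(c)_n\,n!}z^n$, $z\in\mathbb{C}$. *)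

theory Defs
  imports "HOL-Analysis.Analysis"
begin

definition kummerM :: "complex \<Rightarrow> complex \<Rightarrow> complex \<Rightarrow> complex" where
  "kummerM a c z = (\<Sum>n. pochhammer a n / (pochhammer c n * of_nat (fact n)) * z ^ n)"

text \<open>The sequence u_n; index Suc (Suc n) corresponds to u_{n+1} with n+1 >= 1 in the paper.\<close>
fun useq :: "complex \<Rightarrow> complex \<Rightarrow> complex \<Rightarrow> nat \<Rightarrow> complex" where
  "useq a c p 0 = 1"
| "useq a c p (Suc 0) = a / c + p"
| "useq a c p (Suc (Suc n)) =
     (let m = of_nat (Suc n) :: complex in
      (a + p * (c + 2 * m) + m) / ((m + 1) * (c + m)) * useq a c p (Suc n)
      - p * (p + 1) / ((m + 1) * (c + m)) * useq a c p n)"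

fun vseq :: "complex \<Rightarrow> complex \<Rightarrow> complex \<Rightarrow> nat \<Rightarrow> complex" where
  "vseq a c p 0 = 1"
| "vseq a c p (Suc 0) = a / c - p"
| "vseq a c p (Suc (Suc n)) =
     (let m = of_nat (Suc n) :: complex in
      (a - p * (c + 2 * m) + m) / ((m + 1) * (c + m)) * vseq a c p (Suc n)
      - (p - 1) * p / ((m + 1) * (c + m)) * vseq a c p n)"

end

(*
  Kummer's equation z w'' + (c - z) w' = a w holds for w = M(a,c;z) as an identity of formal
  power series.  Substituting w = e^(-pz) y turns it into
  z y'' + (c - (1 + 2p) z) y' + (p (p + 1) z - p c) y = a y,
  and comparing coefficients of z^(n+1) in this equation yields exactly the recursion defining u_n,
  so u_n are the Taylor coefficients of e^(pz) M(a,c;z); the v_n are the same with -p in place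
  of p.  M is entire by the ratio test, so both series converge everywhere, and their mean is
  cosh(pz) M(a,c;z).
*)
theory Submission
  imports Defs "HOL-Analysis.FPS_Convergence"
begin

lemma conv_radius_inftyI_ratio:
  fixes f :: "nat \<Rightarrow> 'a::{banach, real_normed_field}"
  assumes ratio: "\<And>n. f (Suc n) = r n * f n" and "r \<longlonglongrightarrow> 0"
  shows "conv_radius f = \<infinity>"
proof (rule conv_radius_inftyI'')
  fix z :: 'a
  have "(\<lambda>n. norm (r n * z)) \<longlonglongrightarrow> 0"
    using \<open>r \<longlonglongrightarrow> 0\<close> by (intro tendsto_norm_zero) (auto intro: tendsto_mult_left_zero)
  then have "\<forall>\<^sub>F n in sequentially. norm (r n * z) < 1/2"
    by (rule order_tendstoD) simp
  then obtain N where N: "\<And>n. n \<ge> N \<Longrightarrow> norm (r n * z) < 1/2"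
    unfolding eventually_sequentially by blast
  show "summable (\<lambda>n. f n * z ^ n)"
  proof (rule summable_ratio_test[of "1/2" N])
    fix n assume "n \<ge> N"
    have "norm (f (Suc n) * z ^ Suc n) = norm (r n * z) * norm (f n * z ^ n)"
      by (simp add: ratio norm_mult algebra_simps)
    also have "\<dots> \<le> 1/2 * norm (f n * z ^ n)"
      using N[OF \<open>n \<ge> N\<close>] by (intro mult_right_mono) simp_all
    finally show "norm (f (Suc n) * z ^ Suc n) \<le> 1/2 * norm (f n * z ^ n)" .
  qed simp
qed

lemma fps_exp_mult_kummer_ode:
  fixes F :: "'a::field_char_0 fps" and p :: 'a
  assumes ode: "fps_X * fps_deriv (fps_deriv F) + (fps_const c - fps_X) * fps_deriv F = fps_const a * F"
  defines "G \<equiv> fps_exp p * F"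
  shows "fps_X * fps_deriv (fps_deriv G) + (fps_const c - fps_const (1 + 2 * p) * fps_X) * fps_deriv G
           + (fps_const (p * (p + 1)) * fps_X - fps_const (p * c)) * G = fps_const a * G"
proof -
  have dG: "fps_deriv G = fps_const p * G + fps_exp p * fps_deriv F"
    by (simp add: G_def algebra_simps)
  have ddG: "fps_deriv (fps_deriv G) = fps_const p * fps_deriv G
               + fps_const p * fps_exp p * fps_deriv F + fps_exp p * fps_deriv (fps_deriv F)"
    by (simp add: dG G_def algebra_simps)
  have "fps_X * fps_deriv (fps_deriv G) + (fps_const c - fps_const (1 + 2 * p) * fps_X) * fps_deriv G
          + (fps_const (p * (p + 1)) * fps_X - fps_const (p * c)) * G
        = fps_exp p * (fps_X * fps_deriv (fps_deriv F) + (fps_const c - fps_X) * fps_deriv F)"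
    unfolding ddG unfolding dG unfolding G_def fps_const_add[symmetric] fps_const_mult[symmetric]
      fps_const_1_eq_1 numeral_fps_const[symmetric]
    by algebra
  also have "\<dots> = fps_const a * G"
    by (simp add: ode G_def mult.left_commute)
  finally show ?thesis .
qed

lemma fps_nth_Suc_Suc_of_twisted_kummer_ode:
  fixes G :: "'a::comm_ring_1 fps"
  assumes "fps_X * fps_deriv (fps_deriv G) + (fps_const c - fps_const (1 + 2 * p) * fps_X) * fps_deriv G
             + (fps_const (p * (p + 1)) * fps_X - fps_const (p * c)) * G = fps_const a * G"
  shows "(of_nat n + 2) * (c + of_nat n + 1) * fps_nth G (Suc (Suc n))
           = (a + p * (c + 2 * (of_nat n + 1)) + of_nat n + 1) * fps_nth G (Suc n)
             - p * (p + 1) * fps_nth G n"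
proof -
  have "fps_nth (fps_X * fps_deriv (fps_deriv G) + (fps_const c - fps_const (1 + 2 * p) * fps_X) * fps_deriv G
             + (fps_const (p * (p + 1)) * fps_X - fps_const (p * c)) * G) (Suc n)
        = fps_nth (fps_const a * G) (Suc n)"
    by (simp only: assms)
  then show ?thesis
    by (simp add: ring_distribs mult.assoc algebra_simps)
qed

definition kummer_fps :: "complex \<Rightarrow> complex \<Rightarrow> complex fps" where
  "kummer_fps a c = Abs_fps (\<lambda>n. pochhammer a n / (pochhammer c n * of_nat (fact n)))"

lemma eval_kummer_fps: "eval_fps (kummer_fps a c) z = kummerM a c z"
  by (simp add: eval_fps_def kummer_fps_def kummerM_def)

lemma kummer_fps_nth_Suc:
  assumes "\<forall>k::nat. c \<noteq> - of_nat k"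
  shows "(of_nat n + 1) * (c + of_nat n) * fps_nth (kummer_fps a c) (Suc n)
           = (a + of_nat n) * fps_nth (kummer_fps a c) n"
proof -
  have "pochhammer c n \<noteq> 0" "c + of_nat n \<noteq> 0"
    using assms by (auto simp: pochhammer_eq_0_iff add_eq_0_iff2)
  moreover have "1 + of_nat n \<noteq> (0::complex)"
    by (metis of_nat_Suc of_nat_neq_0 add.commute)
  ultimately show ?thesis
    by (simp add: kummer_fps_def pochhammer_Suc divide_simps)
qed

lemma fps_conv_radius_kummer_fps:
  assumes "\<forall>k::nat. c \<noteq> - of_nat k"
  shows "fps_conv_radius (kummer_fps a c) = \<infinity>"
proof -
  define r where "r n = (a + of_nat n) / ((of_nat n + 1) * (c + of_nat n))" for n
  have "(\<lambda>n. 1 + (a - 1) / (of_nat n + 1)) \<longlonglongrightarrow> 1 + 0"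
    by (intro tendsto_add tendsto_const tendsto_divide_0[OF tendsto_const]
          tendsto_add_filterlim_at_infinity'[OF tendsto_of_nat tendsto_const])
  then have "(\<lambda>n. (1 + (a - 1) / (of_nat n + 1)) / (c + of_nat n)) \<longlonglongrightarrow> 0"
    by (intro tendsto_divide_0 tendsto_add_filterlim_at_infinity[OF tendsto_const tendsto_of_nat])
  moreover have "(1 + (a - 1) / (of_nat n + 1)) / (c + of_nat n) = r n" for n
  proof -
    have "of_nat n + 1 \<noteq> (0::complex)"
      by (metis of_nat_Suc of_nat_neq_0 add.commute)
    then show ?thesis
      by (simp add: r_def field_simps)
  qed
  ultimately have "r \<longlonglongrightarrow> 0"
    by simp
  moreover have "fps_nth (kummer_fps a c) (Suc n) = r n * fps_nth (kummer_fps a c) n" for n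
  proof -
    have "(of_nat n + 1) * (c + of_nat n) \<noteq> (0::complex)"
      using assms by (metis add_eq_0_iff2 mult_eq_0_iff of_nat_Suc of_nat_neq_0 add.commute)
    then show ?thesis
      using kummer_fps_nth_Suc[OF assms, of n a] by (simp add: r_def field_simps)
  qed
  ultimately show ?thesis
    unfolding fps_conv_radius_def by (intro conv_radius_inftyI_ratio)
qed

lemma kummer_fps_ode:
  assumes "\<forall>k::nat. c \<noteq> - of_nat k"
  shows "fps_X * fps_deriv (fps_deriv (kummer_fps a c)) + (fps_const c - fps_X) * fps_deriv (kummer_fps a c)
           = fps_const a * kummer_fps a c"
proof (rule fps_ext)
  fix n
  show "fps_nth (fps_X * fps_deriv (fps_deriv (kummer_fps a c))
                 + (fps_const c - fps_X) * fps_deriv (kummer_fps a c)) n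
        = fps_nth (fps_const a * kummer_fps a c) n"
    using kummer_fps_nth_Suc[OF assms, of n a] by (cases n) (simp_all add: algebra_simps)
qed

lemma useq_eq_fps_nth:
  assumes "\<forall>k::nat. c \<noteq> - of_nat k"
  shows "useq a c p n = fps_nth (fps_exp p * kummer_fps a c) n"
  using assms
proof (induction a c p n rule: useq.induct)
  case (1 a c p)
  then show ?case by (simp add: kummer_fps_def fps_mult_nth)
next
  case (2 a c p)
  then show ?case by (simp add: kummer_fps_def fps_mult_nth)
next
  case (3 a c p n)
  let ?G = "fps_exp p * kummer_fps a c"
  define m :: complex where "m = of_nat (Suc n)"
  let ?D = "(m + 1) * (c + m)"
  have rec: "(a + p * (c + 2 * m) + m) * fps_nth ?G (Suc n) - p * (p + 1) * fps_nth ?G n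
               = ?D * fps_nth ?G (Suc (Suc n))"
    using fps_nth_Suc_Suc_of_twisted_kummer_ode[OF fps_exp_mult_kummer_ode[OF kummer_fps_ode[OF 3(3)]]]
    by (simp add: m_def algebra_simps)
  have "?D \<noteq> 0"
    using 3(3) unfolding m_def by (metis add_eq_0_iff2 mult_eq_0_iff of_nat_Suc of_nat_neq_0 add.commute)
  have "useq a c p (Suc (Suc n))
      = (a + p * (c + 2 * m) + m) / ?D * fps_nth ?G (Suc n) - p * (p + 1) / ?D * fps_nth ?G n"
    by (simp only: useq.simps Let_def m_def 3(1,2)[OF refl 3(3)])
  also have "\<dots> = ((a + p * (c + 2 * m) + m) * fps_nth ?G (Suc n) - p * (p + 1) * fps_nth ?G n) / ?D"
    by (simp add: diff_divide_distrib)
  also have "\<dots> = fps_nth ?G (Suc (Suc n))"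
    unfolding rec using \<open>?D \<noteq> 0\<close> by simp
  finally show ?case .
qed

lemma useq_sums:
  assumes "\<forall>k::nat. c \<noteq> - of_nat k"
  shows "(\<lambda>n. useq a c p n * z ^ n) sums (exp (p * z) * kummerM a c z)"
proof -
  have "fps_conv_radius (fps_exp p * kummer_fps a c) = \<infinity>"
    using fps_conv_radius_mult[of "fps_exp p" "kummer_fps a c"]
    by (simp add: fps_conv_radius_kummer_fps[OF assms])
  then have "(\<lambda>n. fps_nth (fps_exp p * kummer_fps a c) n * z ^ n)
               sums eval_fps (fps_exp p * kummer_fps a c) z"
    by (intro sums_eval_fps) simp
  also have "eval_fps (fps_exp p * kummer_fps a c) z = exp (p * z) * kummerM a c z"
    by (simp add: eval_fps_mult fps_conv_radius_kummer_fps[OF assms] eval_kummer_fps)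
  finally show ?thesis
    by (simp add: useq_eq_fps_nth[OF assms])
qed

lemma vseq_eq_useq_uminus: "vseq a c p n = useq a c (- p) n"
  by (induction a c p n rule: vseq.induct) (simp_all add: Let_def algebra_simps)

theorem theorem2p3:
  fixes a c p z :: complex
  assumes "\<forall>k::nat. c \<noteq> - of_nat k"
  shows "(\<lambda>n. (useq a c p n + vseq a c p n) / 2 * z ^ n) sums (cosh (p * z) * kummerM a c z)"
proof -
  have "(\<lambda>n. useq a c p n * z ^ n + vseq a c p n * z ^ n)
          sums (exp (p * z) * kummerM a c z + exp (- p * z) * kummerM a c z)"
    unfolding vseq_eq_useq_uminus by (intro sums_add useq_sums assms)
  then have "(\<lambda>n. (useq a c p n * z ^ n + vseq a c p n * z ^ n) / 2)
               sums ((exp (p * z) * kummerM a c z + exp (- p * z) * kummerM a c z) / 2)"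
    by (rule sums_divide)
  moreover have "(exp (p * z) * kummerM a c z + exp (- p * z) * kummerM a c z) / 2
                   = cosh (p * z) * kummerM a c z"
    by (simp add: cosh_field_def field_simps)
  ultimately show ?thesis
    by (simp add: add_divide_distrib algebra_simps)
qed

end
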